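(* Let $f(x,y)=-x^3e^y(x+e^y)$ and consider the constrained system $$\ddot x+\Big(\frac{1}{x+e^y}+\frac3x\Big)\dot x^2=0,\qquad \ddot y+\Big(\frac{e^y}{x+e^y}+1\Big)\dot y^2=0,\qquad f(x,y)\dot x\dot y=E_0\neq0,$$ i.e. the non-null geodesics of the metric $\gamma_{12}=\gamma_{21}=f$, $\gamma_{11}=\gamma_{22}=0$, with $\gamma_{ab}\dot q^a\dot q^b=2E_0$. Then $$I_1=x^6(x+e^y)^2\dot x^2+\frac{E_0}{2}x^4$$ is a first integral of this constrained system. Moreover, along any solution with $I_1=0$ one has $E_0<0$, the orbit is $y=\ln(c_1x^2-2x)$ for a constant $c_1$, and $t=\pm\sqrt{-2/E_0}\,\big(\tfrac{c_1}{4}x^4-\tfrac{x^3}{3}\big)+t_0$ for a constant $t_0$.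
   Context: A first integral of the constrained system is a function whose time derivative vanishes along every solution of the three displayed equations. The metric here is defined on the region where $f\neq0$. *)

theory Defs
  imports "HOL-Analysis.Analysis"
begin

definition fmet :: "real \<Rightarrow> real \<Rightarrow> real" where
  "fmet x y = - (x ^ 3) * exp y * (x + exp y)"

definition I1 :: "real \<Rightarrow> real \<Rightarrow> real \<Rightarrow> real \<Rightarrow> real" where
  "I1 E0 x y xd = x ^ 6 * (x + exp y) ^ 2 * xd ^ 2 + E0 / 2 * x ^ 4"

end

theory Submission
  imports Defs
begin

text \<open>
  Put \<open>u = x + e\<^sup>y\<close> and \<open>w = x u x'\<close>, so that \<open>I\<^sub>1 = x\<^sup>4 (w\<^sup>2 + E\<^sub>0/2)\<close> and the constraint
  reads \<open>E\<^sub>0 = -e\<^sup>y y' x\<^sup>3 u x'\<close>. Differentiating \<open>I\<^sub>1\<close> and eliminating \<open>x''\<close> by the \<open>x\<close>-equation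
  and \<open>E\<^sub>0\<close> by the constraint gives zero. If \<open>I\<^sub>1 = 0\<close> then \<open>w\<^sup>2 = -E\<^sub>0/2\<close>, so \<open>E\<^sub>0 < 0\<close>, and
  feeding \<open>E\<^sub>0 = -2w\<^sup>2\<close> back into the constraint gives \<open>e\<^sup>y y' x = 2 x' u\<close>, which says that
  \<open>(e\<^sup>y + 2x)/x\<^sup>2\<close> is a constant \<open>c\<^sub>1\<close>. Finally \<open>w\<close> never vanishes, so it has a constant sign
  \<open>\<sigma>\<close>, and on the orbit it is the time derivative of \<open>c\<^sub>1 x\<^sup>4/4 - x\<^sup>3/3\<close>; integrating
  \<open>w = \<sigma> \<surd>(-E\<^sub>0/2)\<close> gives the time law.
\<close>

lemma DERIV_zero_connected_real_constant:
  fixes F :: "real \<Rightarrow> real"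
  assumes "connected J" "\<And>t. t \<in> J \<Longrightarrow> (F has_real_derivative 0) (at t)"
  shows "\<exists>c. \<forall>t\<in>J. F t = c"
  using assms by (intro has_field_derivative_zero_constant)
    (auto simp: connected_convex_1 intro: has_field_derivative_at_within)

lemma connected_nonvanishing_sign_constant:
  fixes w :: "'a::topological_space \<Rightarrow> real"
  assumes "connected J" "continuous_on J w" "\<And>t. t \<in> J \<Longrightarrow> w t \<noteq> 0"
  shows "(\<forall>t\<in>J. 0 < w t) \<or> (\<forall>t\<in>J. w t < 0)"
proof (rule ccontr)
  assume "\<not> ?thesis"
  then obtain a b where "a \<in> J" "b \<in> J" "w a \<le> 0" "0 \<le> w b"
    by (meson not_less)
  moreover have "connected (w ` J)"
    using assms(1,2) by (rule connected_continuous_image[rotated])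
  ultimately have "0 \<in> w ` J"
    unfolding connected_iff_interval by blast
  then show False
    using assms(3) by force
qed

lemma I1_derivative_cancels:
  fixes X U X' X'' E Y' E0 :: real
  assumes "X \<noteq> 0" "U \<noteq> 0"
    and "X'' + (1 / U + 3 / X) * X' ^ 2 = 0"
    and "E * Y' * X ^ 3 * U * X' = - E0"
  shows "6 * X ^ 5 * X' * U ^ 2 * X' ^ 2 + X ^ 6 * (2 * U * (X' + E * Y')) * X' ^ 2
    + X ^ 6 * U ^ 2 * (2 * X' * X'') + E0 / 2 * (4 * X ^ 3 * X') = 0"
proof -
  have "U * X * X'' = - (X + 3 * U) * X' ^ 2"
    using assms(1-3) by (simp add: field_simps)
  then show ?thesis
    using assms(4) by algebra
qed

locale fmet_geodesic =
  fixes J :: "real set" and E0 :: real and x y x' y' x'' :: "real \<Rightarrow> real"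
  assumes J_connected: "connected J" and J_nonempty: "J \<noteq> {}"
    and dx: "\<And>t. t \<in> J \<Longrightarrow> (x has_real_derivative x' t) (at t)"
    and dx': "\<And>t. t \<in> J \<Longrightarrow> (x' has_real_derivative x'' t) (at t)"
    and dy: "\<And>t. t \<in> J \<Longrightarrow> (y has_real_derivative y' t) (at t)"
    and regular: "\<And>t. t \<in> J \<Longrightarrow> fmet (x t) (y t) \<noteq> 0"
    and eqx: "\<And>t. t \<in> J \<Longrightarrow> x'' t + (1 / (x t + exp (y t)) + 3 / x t) * (x' t) ^ 2 = 0"
    and constraint: "\<And>t. t \<in> J \<Longrightarrow> fmet (x t) (y t) * x' t * y' t = E0"
    and E0_nonzero: "E0 \<noteq> 0"
begin

definition w :: "real \<Rightarrow> real" where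
  "w t = x t * (x t + exp (y t)) * x' t"

lemma x_nonzero: "t \<in> J \<Longrightarrow> x t \<noteq> 0"
  and x_plus_exp_y_nonzero: "t \<in> J \<Longrightarrow> x t + exp (y t) \<noteq> 0"
  using regular by (auto simp: fmet_def)

lemma constraint_expanded:
  assumes "t \<in> J"
  shows "exp (y t) * y' t * x t ^ 3 * (x t + exp (y t)) * x' t = - E0"
  using constraint[OF assms] unfolding fmet_def by (simp add: algebra_simps)

lemma x'_nonzero: "t \<in> J \<Longrightarrow> x' t \<noteq> 0"
  using constraint_expanded E0_nonzero by fastforce

lemma w_nonzero: "t \<in> J \<Longrightarrow> w t \<noteq> 0"
  by (simp add: w_def x_nonzero x_plus_exp_y_nonzero x'_nonzero)

lemma I1_eq_w: "I1 E0 (x t) (y t) (x' t) = x t ^ 4 * (w t ^ 2 + E0 / 2)"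
  by (simp add: I1_def w_def algebra_simps eval_nat_numeral)

lemma I1_has_derivative_zero:
  assumes "t \<in> J"
  shows "((\<lambda>t. I1 E0 (x t) (y t) (x' t)) has_real_derivative 0) (at t)"
proof -
  note derivs = dx[OF assms] dx'[OF assms] dy[OF assms]
  have "((\<lambda>t. I1 E0 (x t) (y t) (x' t)) has_real_derivative
      6 * x t ^ 5 * x' t * (x t + exp (y t)) ^ 2 * x' t ^ 2
      + x t ^ 6 * (2 * (x t + exp (y t)) * (x' t + exp (y t) * y' t)) * x' t ^ 2
      + x t ^ 6 * (x t + exp (y t)) ^ 2 * (2 * x' t * x'' t)
      + E0 / 2 * (4 * x t ^ 3 * x' t)) (at t)"
    unfolding I1_def by (rule derivative_eq_intros derivs refl | simp add: algebra_simps)+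
  then show ?thesis
    using I1_derivative_cancels[OF x_nonzero x_plus_exp_y_nonzero eqx constraint_expanded]
      assms by simp
qed

lemma I1_constant: "\<exists>C. \<forall>t\<in>J. I1 E0 (x t) (y t) (x' t) = C"
  using J_connected I1_has_derivative_zero by (rule DERIV_zero_connected_real_constant)

lemma continuous_on_w: "continuous_on J w"
proof -
  have "isCont w t" if "t \<in> J" for t
    unfolding w_def using that
    by (intro continuous_intros DERIV_isCont[OF dx] DERIV_isCont[OF dy] DERIV_isCont[OF dx'])
  then show ?thesis
    by (simp add: continuous_at_imp_continuous_on)
qed

end

locale fmet_geodesic_I1_zero = fmet_geodesic +
  assumes I1_zero: "\<And>t. t \<in> J \<Longrightarrow> I1 E0 (x t) (y t) (x' t) = 0"
begin

lemma w_squared: "t \<in> J \<Longrightarrow> w t ^ 2 = - E0 / 2"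
  using I1_zero[unfolded I1_eq_w] x_nonzero by fastforce

lemma E0_negative: "E0 < 0"
proof -
  obtain t where "t \<in> J"
    using J_nonempty by blast
  then have "0 < w t ^ 2"
    using w_nonzero by simp
  with w_squared[OF \<open>t \<in> J\<close>] show ?thesis
    by simp
qed

lemma orbit_equation:
  assumes "t \<in> J"
  shows "exp (y t) * y' t * x t = 2 * x' t * (x t + exp (y t))"
proof -
  have "x t ^ 2 * (x t + exp (y t)) * x' t
      * (exp (y t) * y' t * x t - 2 * x' t * (x t + exp (y t))) = 0"
    using constraint_expanded[OF assms] w_squared[OF assms] unfolding w_def by algebra
  then show ?thesis
    using x_nonzero x_plus_exp_y_nonzero x'_nonzero assms by simp
qed

lemma orbit_constant: "\<exists>c1. \<forall>t\<in>J. exp (y t) = c1 * x t ^ 2 - 2 * x t"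
proof -
  have "((\<lambda>t. (exp (y t) + 2 * x t) / x t ^ 2) has_real_derivative 0) (at t)" if "t \<in> J" for t
  proof -
    have "((\<lambda>t. (exp (y t) + 2 * x t) / x t ^ 2) has_real_derivative
        x t * (exp (y t) * y' t * x t - 2 * x' t * (x t + exp (y t))) / (x t ^ 2) ^ 2) (at t)"
      using that x_nonzero
      by (auto intro!: derivative_eq_intros dx dy simp: algebra_simps power2_eq_square)
    then show ?thesis
      using orbit_equation[OF that] by simp
  qed
  then obtain c1 where "\<forall>t\<in>J. (exp (y t) + 2 * x t) / x t ^ 2 = c1"
    using J_connected DERIV_zero_connected_real_constant by blast
  then show ?thesis
    using x_nonzero by (auto simp: field_simps)
qed

lemma w_eq_sign_sqrt: "\<exists>\<sigma>\<in>{-1, 1}. \<forall>t\<in>J. w t = \<sigma> * sqrt (- E0 / 2)"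
proof -
  have w_abs: "\<bar>w t\<bar> = sqrt (- E0 / 2)" if "t \<in> J" for t
    using w_squared[OF that] by (metis real_sqrt_abs)
  from connected_nonvanishing_sign_constant[OF J_connected continuous_on_w w_nonzero]
  show ?thesis
  proof
    assume "\<forall>t\<in>J. 0 < w t"
    then show ?thesis
      using w_abs by (intro bexI[of _ 1]) (auto simp: abs_of_pos)
  next
    assume "\<forall>t\<in>J. w t < 0"
    then show ?thesis
      using w_abs by (intro bexI[of _ "-1"]) (force simp: abs_of_neg, simp)
  qed
qed

lemma time_law:
  assumes c1: "\<forall>t\<in>J. exp (y t) = c1 * x t ^ 2 - 2 * x t"
  shows "\<exists>t0. \<exists>\<sigma>\<in>{-1, 1::real}. \<forall>t\<in>J.
    t = \<sigma> * sqrt (- 2 / E0) * (c1 / 4 * x t ^ 4 - x t ^ 3 / 3) + t0"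
proof -
  obtain \<sigma> where \<sigma>: "\<sigma> \<in> {-1, 1}" and w: "\<And>t. t \<in> J \<Longrightarrow> w t = \<sigma> * sqrt (- E0 / 2)"
    using w_eq_sign_sqrt by blast
  have k: "sqrt (- 2 / E0) * sqrt (- E0 / 2) = 1"
    using E0_negative by (simp add: real_sqrt_mult[symmetric])
  define G where "G t = c1 / 4 * x t ^ 4 - x t ^ 3 / 3" for t
  \<comment> \<open>\<open>G\<close> is a primitive of \<open>w\<close> along the orbit, since \<open>c\<^sub>1 x\<^sup>2 - x = x + e\<^sup>y\<close>\<close>
  have "((\<lambda>t. t - \<sigma> * sqrt (- 2 / E0) * G t) has_real_derivative 0) (at t)" if "t \<in> J" for t
  proof -
    have "((\<lambda>t. t - \<sigma> * sqrt (- 2 / E0) * G t) has_real_derivative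
        1 - \<sigma> * sqrt (- 2 / E0) * (x t * (c1 * x t ^ 2 - x t) * x' t)) (at t)"
      unfolding G_def using that
      by (auto intro!: derivative_eq_intros dx simp: algebra_simps eval_nat_numeral)
    also have "x t * (c1 * x t ^ 2 - x t) * x' t = w t"
      using c1 that by (simp add: w_def)
    finally show ?thesis
      using w[OF that] \<sigma> k by (auto simp: algebra_simps)
  qed
  then obtain t0 where "\<forall>t\<in>J. t - \<sigma> * sqrt (- 2 / E0) * G t = t0"
    using J_connected DERIV_zero_connected_real_constant by blast
  then show ?thesis
    using \<sigma> unfolding G_def by (intro exI[of _ t0] bexI[of _ \<sigma>]) (auto simp: algebra_simps)
qed

lemma null_solution:
  "E0 < 0 \<and> (\<exists>c1. (\<forall>t\<in>J. c1 * x t ^ 2 - 2 * x t > 0 \<and> y t = ln (c1 * x t ^ 2 - 2 * x t))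
     \<and> (\<exists>t0. \<exists>\<sigma>\<in>{-1, 1::real}. \<forall>t\<in>J.
           t = \<sigma> * sqrt (- 2 / E0) * (c1 / 4 * x t ^ 4 - x t ^ 3 / 3) + t0))"
proof -
  obtain c1 where c1: "\<forall>t\<in>J. exp (y t) = c1 * x t ^ 2 - 2 * x t"
    using orbit_constant by blast
  then have "\<forall>t\<in>J. c1 * x t ^ 2 - 2 * x t > 0 \<and> y t = ln (c1 * x t ^ 2 - 2 * x t)"
    by (metis exp_gt_zero ln_exp)
  with E0_negative time_law[OF c1] show ?thesis
    by blast
qed

end

theorem mainTheorem9:
  fixes x y x' y' x'' y'' :: "real \<Rightarrow> real" and J :: "real set" and E0 :: real
  assumes J: "open J" "connected J" "J \<noteq> {}"
    and dx: "\<And>t. t \<in> J \<Longrightarrow> (x has_real_derivative x' t) (at t)"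
    and dx': "\<And>t. t \<in> J \<Longrightarrow> (x' has_real_derivative x'' t) (at t)"
    and dy: "\<And>t. t \<in> J \<Longrightarrow> (y has_real_derivative y' t) (at t)"
    and dy': "\<And>t. t \<in> J \<Longrightarrow> (y' has_real_derivative y'' t) (at t)"
    and reg: "\<And>t. t \<in> J \<Longrightarrow> fmet (x t) (y t) \<noteq> 0"
    and eqx: "\<And>t. t \<in> J \<Longrightarrow>
       x'' t + (1 / (x t + exp (y t)) + 3 / x t) * (x' t) ^ 2 = 0"
    and eqy: "\<And>t. t \<in> J \<Longrightarrow>
       y'' t + (exp (y t) / (x t + exp (y t)) + 1) * (y' t) ^ 2 = 0"
    and constr: "\<And>t. t \<in> J \<Longrightarrow> fmet (x t) (y t) * x' t * y' t = E0"
    and E0: "E0 \<noteq> 0"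
  shows "(\<exists>C. \<forall>t\<in>J. I1 E0 (x t) (y t) (x' t) = C)
    \<and> ((\<forall>t\<in>J. I1 E0 (x t) (y t) (x' t) = 0) \<longrightarrow>
         E0 < 0
       \<and> (\<exists>c1. (\<forall>t\<in>J. c1 * (x t) ^ 2 - 2 * x t > 0
                       \<and> y t = ln (c1 * (x t) ^ 2 - 2 * x t))
             \<and> (\<exists>t0. \<exists>\<sigma>\<in>{-1, 1::real}. \<forall>t\<in>J.
                  t = \<sigma> * sqrt (- 2 / E0) * (c1 / 4 * (x t) ^ 4 - (x t) ^ 3 / 3) + t0)))"
proof -
  interpret fmet_geodesic J E0 x y x' y' x''
    using J(2,3) dx dx' dy reg eqx constr E0 by unfold_locales
  have "fmet_geodesic_I1_zero J E0 x y x' y' x''" if "\<forall>t\<in>J. I1 E0 (x t) (y t) (x' t) = 0"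
    using that
    by (intro fmet_geodesic_I1_zero.intro fmet_geodesic_axioms fmet_geodesic_I1_zero_axioms.intro)
      auto
  then show ?thesis
    using I1_constant fmet_geodesic_I1_zero.null_solution by blast
qed

end
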